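(* Let $a\in\mathbb{C}$, let $v=\{v_n\}_{n=1}^\infty\in\ell^1(\mathbb{N})$ be a complex sequence and $V=\mathrm{diag}(v_1,v_2,\dots)$. Then \[ \sigma_{\mathrm p}(J_a+V)\subset\{\pm2\}\cup\Big\{z\in\mathbb{C}\setminus[-2,2]\ \Big|\ \sqrt{|z^2-4|}\le g_a(z)\,\|v\|_{\ell^1}\Big\}. \]
   Context: $\mathbb{N}=\{1,2,\dots\}$. For $a\in\mathbb{C}$, $J_a$ is the operator on $\ell^2(\mathbb{N})$ with $(J_a\psi)_1=a\psi_1+\psi_2$ and $(J_a\psi)_n=\psi_{n-1}+\psi_{n+1}$ for $n\ge2$. Every $z\in\mathbb{C}\setminus[-2,2]$ can be written uniquely as $z=k+k^{-1}$ with $0<|k|<1$, and for such $z$ one defines \[ g_a(z):=\sup_{n\in\mathbb{N}}\Big|1-\frac{k-a}{1-ak}\,k^{2n-1}\Big|, \] with the convention $g_a(a+a^{-1})=+\infty$ when $|a|>1$ (where $1-ak=0$). $\sigma_{\mathrm p}$ denotes the set of eigenvalues. *)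

theory Defs
  imports "HOL-Analysis.Analysis"
begin

text \<open>Sequences indexed by the paper's N = {1,2,...} are represented 0-based:
  the paper's psi_n is our psi (n - 1).\<close>

definition l2seq :: "(nat \<Rightarrow> complex) \<Rightarrow> bool" where
  "l2seq \<psi> \<longleftrightarrow> summable (\<lambda>n. (cmod (\<psi> n))\<^sup>2)"

definition jacobi_apply :: "complex \<Rightarrow> (nat \<Rightarrow> complex) \<Rightarrow> (nat \<Rightarrow> complex) \<Rightarrow> nat \<Rightarrow> complex" where
  "jacobi_apply a v \<psi> n =
     (if n = 0 then a * \<psi> 0 + \<psi> 1 else \<psi> (n - 1) + \<psi> (n + 1)) + v n * \<psi> n"

definition point_spectrum :: "complex \<Rightarrow> (nat \<Rightarrow> complex) \<Rightarrow> complex set" where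
  "point_spectrum a v =
     {z. \<exists>\<psi>. l2seq \<psi> \<and> \<psi> \<noteq> (\<lambda>_. 0) \<and> (\<forall>n. jacobi_apply a v \<psi> n = z * \<psi> n)}"

definition kpar :: "complex \<Rightarrow> complex" where
  "kpar z = (THE k. 0 < cmod k \<and> cmod k < 1 \<and> z = k + inverse k)"

definition g_fun :: "complex \<Rightarrow> complex \<Rightarrow> ereal" where
  "g_fun a z = (let k = kpar z in
     if 1 - a * k = 0 then \<infinity>
     else (SUP n\<in>{1::nat..}. ereal (cmod (1 - (k - a) / (1 - a * k) * k ^ (2 * n - 1)))))"

definition l1norm :: "(nat \<Rightarrow> complex) \<Rightarrow> real" where
  "l1norm v = (\<Sum>n. cmod (v n))"

end

theory Submission
  imports Defs
begin

(* Inside the band, z = x with |x| < 2, the quadratic form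
   |y(n+1)|^2 + |y n|^2 - x Re (y(n+1) conj (y n)) is conserved by the free recurrence and
   comparable to |y(n+1)|^2 + |y n|^2; the potential changes it by a summable relative amount,
   so it cannot tend to 0 along a nonzero solution, as it would for an l^2 one.
   Outside the band write z = k + 1/k with 0 < |k| < 1. Variation of constants with the decaying
   solution k^n and the free solution satisfying the boundary condition at the origin expresses an
   eigenvector through a Green kernel whose entries are bounded by g_a(z). Comparing the
   Wronskian k - 1/k, of modulus sqrt |z^2 - 4|, with this representation weighted by |v| gives
   |k - 1/k| <= g_a(z) ||v||_1. *)

lemma joukowski_preimage_in_disc:
  fixes z :: complex
  assumes "z \<notin> complex_of_real ` {-2..2}"
  obtains k where "0 < cmod k" "cmod k < 1" "z = k + inverse k"
proof -
  define s where "s = csqrt (z\<^sup>2 - 4)"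
  define k1 where "k1 = (z + s) / 2"
  define k2 where "k2 = (z - s) / 2"
  have "s\<^sup>2 = z\<^sup>2 - 4" unfolding s_def by simp
  then have prod: "k1 * k2 = 1" unfolding k1_def k2_def by (simp add: field_simps power2_eq_square)
  then have inv: "inverse k1 = k2" "inverse k2 = k1" by (simp_all add: inverse_unique mult.commute)
  have sum: "k1 + k2 = z" unfolding k1_def k2_def by (simp add: field_simps)
  have norms: "cmod k1 * cmod k2 = 1" using prod by (metis norm_mult norm_one)
  have "cmod k1 \<noteq> 1"
  proof
    assume "cmod k1 = 1"
    then have "k1 * cnj k1 = k1 * k2" using prod complex_norm_square[of k1] by simp
    then have "k2 = cnj k1" using prod by (metis mult_left_cancel mult_zero_left zero_neq_one)
    then have "z = k1 + cnj k1" using sum by simp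
    then have "z = complex_of_real (2 * Re k1)" by (simp add: complex_add_cnj)
    moreover have "2 * Re k1 \<in> {-2..2}" using abs_Re_le_cmod[of k1] \<open>cmod k1 = 1\<close> by (simp add: abs_le_iff)
    ultimately show False using assms by blast
  qed
  have "cmod k1 < 1 \<or> cmod k2 < 1"
  proof (rule ccontr)
    assume "\<not> ?thesis"
    then have "1 < cmod k1" "1 \<le> cmod k2" using \<open>cmod k1 \<noteq> 1\<close> by auto
    moreover from this have "cmod k1 * 1 \<le> cmod k1 * cmod k2" by (intro mult_left_mono) auto
    ultimately show False using norms by linarith
  qed
  moreover have "k1 \<noteq> 0" "k2 \<noteq> 0" using prod by auto
  ultimately show ?thesis
    using that[of k1] that[of k2] sum inv by (auto simp: add.commute)
qed

lemma joukowski_inj_on_disc: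
  fixes k k' :: complex
  assumes "cmod k < 1" "cmod k' < 1" "k \<noteq> 0" "k' \<noteq> 0"
    and "k + inverse k = k' + inverse k'"
  shows "k = k'"
proof -
  have "(k - k') * (k * k' - 1) = 0"
    using assms(3-5) by (simp add: field_simps)
  moreover have "cmod (k * k') < 1 * 1"
    unfolding norm_mult using assms(1,2) by (intro mult_strict_mono) auto
  then have "k * k' \<noteq> 1" by auto
  ultimately show ?thesis by simp
qed

lemma kpar_joukowski:
  fixes z :: complex
  assumes "z \<notin> complex_of_real ` {-2..2}"
  shows "0 < cmod (kpar z)" "cmod (kpar z) < 1" "z = kpar z + inverse (kpar z)"
proof -
  obtain k where k: "0 < cmod k" "cmod k < 1" "z = k + inverse k"
    using joukowski_preimage_in_disc[OF assms] .
  have "\<exists>!k. 0 < cmod k \<and> cmod k < 1 \<and> z = k + inverse k"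
    using k joukowski_inj_on_disc by (intro ex1I[of _ k]) auto
  then have "0 < cmod (kpar z) \<and> cmod (kpar z) < 1 \<and> z = kpar z + inverse (kpar z)"
    unfolding kpar_def by (rule theI')
  then show "0 < cmod (kpar z)" "cmod (kpar z) < 1" "z = kpar z + inverse (kpar z)"
    by auto
qed

lemma joukowski_discriminant:
  fixes k :: complex
  assumes "0 < cmod k" and "cmod k < 1"
  shows "sqrt (cmod ((k + inverse k)\<^sup>2 - 4)) = cmod (k - inverse k)"
    and "k - inverse k \<noteq> 0"
proof -
  have "k \<noteq> 0" using assms(1) by auto
  then have "(k + inverse k)\<^sup>2 - 4 = (k - inverse k)\<^sup>2"
    by (simp add: field_simps power2_eq_square)
  then show "sqrt (cmod ((k + inverse k)\<^sup>2 - 4)) = cmod (k - inverse k)"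
    by (simp add: norm_power)
  show "k - inverse k \<noteq> 0"
  proof
    assume "k - inverse k = 0"
    then have "k * k = 1" using \<open>k \<noteq> 0\<close> by (simp add: field_simps)
    then have "cmod k * cmod k = 1" by (metis norm_mult norm_one)
    moreover have "cmod k * cmod k < 1 * 1"
      using assms by (intro mult_strict_mono) auto
    ultimately show False by simp
  qed
qed

lemma l2seq_tendsto_zero:
  assumes "l2seq \<psi>"
  shows "\<psi> \<longlonglongrightarrow> 0"
proof -
  have "(\<lambda>n. (cmod (\<psi> n))\<^sup>2) \<longlonglongrightarrow> 0"
    using assms unfolding l2seq_def by (rule summable_LIMSEQ_zero)
  then have "(\<lambda>n. sqrt ((cmod (\<psi> n))\<^sup>2)) \<longlonglongrightarrow> sqrt 0" by (intro tendsto_intros)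
  then show ?thesis by (simp add: tendsto_norm_zero_iff)
qed

lemma summable_norm_mult_l2seq:
  assumes "summable (\<lambda>n. cmod (v n))" and "l2seq \<psi>"
  shows "summable (\<lambda>n. cmod (v n) * cmod (\<psi> n))"
proof -
  obtain B where "\<And>n. cmod (\<psi> n) \<le> B"
    using convergent_imp_Bseq[OF convergentI[OF l2seq_tendsto_zero[OF assms(2)]]]
    unfolding Bseq_def by auto
  then show ?thesis
    by (intro summable_comparison_test[OF _ summable_mult2[OF assms(1), of B]])
      (auto intro!: mult_left_mono)
qed

definition recurrence_energy :: "real \<Rightarrow> complex \<Rightarrow> complex \<Rightarrow> real" where
  "recurrence_energy x a b = (cmod a)\<^sup>2 + (cmod b)\<^sup>2 - x * Re (a * cnj b)"

lemma recurrence_energy_lower_bound: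
  "(1 - \<bar>x\<bar> / 2) * ((cmod a)\<^sup>2 + (cmod b)\<^sup>2) \<le> recurrence_energy x a b"
proof -
  have "\<bar>Re (a * cnj b)\<bar> \<le> cmod a * cmod b"
    using abs_Re_le_cmod[of "a * cnj b"] by (simp add: norm_mult)
  also have "\<dots> \<le> ((cmod a)\<^sup>2 + (cmod b)\<^sup>2) / 2"
    using sum_squares_bound[of "cmod a" "cmod b"] by (simp add: power2_eq_square)
  finally have Re_bound: "\<bar>Re (a * cnj b)\<bar> \<le> ((cmod a)\<^sup>2 + (cmod b)\<^sup>2) / 2" .
  have "x * Re (a * cnj b) \<le> \<bar>x\<bar> * \<bar>Re (a * cnj b)\<bar>"
    by (metis abs_ge_self abs_mult)
  also have "\<dots> \<le> \<bar>x\<bar> * (((cmod a)\<^sup>2 + (cmod b)\<^sup>2) / 2)"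
    using Re_bound by (rule mult_left_mono) simp
  finally show ?thesis unfolding recurrence_energy_def by (simp add: algebra_simps)
qed

lemma recurrence_energy_conserved:
  "recurrence_energy x (of_real x * a - b) a = recurrence_energy x a b"
  unfolding recurrence_energy_def cmod_power2 by (simp add: power2_eq_square algebra_simps)

lemma recurrence_energy_perturbed_step:
  assumes "\<bar>x\<bar> \<le> 2"
  shows "recurrence_energy x a b - 8 * cmod w * ((cmod a)\<^sup>2 + (cmod b)\<^sup>2)
           \<le> recurrence_energy x ((of_real x - w) * a - b) a"
proof -
  define e where "e = of_real x * a - b"
  have expand: "recurrence_energy x ((of_real x - w) * a - b) a
      = recurrence_energy x a b - 2 * Re (e * cnj (w * a)) + (cmod (w * a))\<^sup>2
        + x * Re (w * a * cnj a)"
    unfolding recurrence_energy_conserved[of x a b, symmetric]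
    unfolding recurrence_energy_def e_def cmod_power2 by (simp add: power2_eq_square algebra_simps)
  have "cmod e \<le> cmod (of_real x * a) + cmod b"
    unfolding e_def by (rule norm_triangle_ineq4)
  also have "\<dots> \<le> 2 * cmod a + cmod b"
    using assms by (simp add: norm_mult mult_right_mono)
  finally have "cmod e * (cmod w * cmod a) \<le> (2 * cmod a + cmod b) * (cmod w * cmod a)"
    by (simp add: mult_right_mono)
  moreover have "\<bar>Re (e * cnj (w * a))\<bar> \<le> cmod e * (cmod w * cmod a)"
    using abs_Re_le_cmod[of "e * cnj (w * a)"] by (simp add: norm_mult)
  ultimately have "2 * Re (e * cnj (w * a))
      \<le> 4 * (cmod w * (cmod a)\<^sup>2) + 2 * (cmod w * cmod a * cmod b)"
    by (simp add: algebra_simps power2_eq_square)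
  moreover have "\<bar>x * Re (w * a * cnj a)\<bar> \<le> 2 * (cmod w * (cmod a)\<^sup>2)"
    using abs_Re_le_cmod[of "w * a * cnj a"] assms
    by (simp add: abs_mult norm_mult power2_eq_square mult_mono)
  then have "- 2 * (cmod w * (cmod a)\<^sup>2) \<le> x * Re (w * a * cnj a)"
    by linarith
  moreover have "2 * (cmod w * cmod a * cmod b) \<le> cmod w * (cmod a)\<^sup>2 + cmod w * (cmod b)\<^sup>2"
    using mult_left_mono[OF sum_squares_bound[of "cmod a" "cmod b"], of "cmod w"]
    by (simp add: algebra_simps power2_eq_square)
  moreover have "0 \<le> cmod w * (cmod a)\<^sup>2" "0 \<le> cmod w * (cmod b)\<^sup>2" "0 \<le> (cmod (w * a))\<^sup>2"
    by simp_all
  moreover have "8 * cmod w * ((cmod a)\<^sup>2 + (cmod b)\<^sup>2)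
      = 8 * (cmod w * (cmod a)\<^sup>2) + 8 * (cmod w * (cmod b)\<^sup>2)"
    by (simp add: algebra_simps)
  ultimately show ?thesis
    unfolding expand by linarith
qed

lemma recurrence_energy_relative_step:
  assumes "\<bar>x\<bar> < 2"
  shows "recurrence_energy x a b * (1 - 8 * cmod w / (1 - \<bar>x\<bar> / 2))
           \<le> recurrence_energy x ((of_real x - w) * a - b) a"
proof -
  define \<delta> where "\<delta> = 1 - \<bar>x\<bar> / 2"
  have "0 < \<delta>" using assms by (simp add: \<delta>_def)
  have "8 * cmod w * ((cmod a)\<^sup>2 + (cmod b)\<^sup>2) \<le> 8 * cmod w * (recurrence_energy x a b / \<delta>)"
    using recurrence_energy_lower_bound[of x a b] \<open>0 < \<delta>\<close>
    by (intro mult_left_mono) (simp_all add: \<delta>_def field_simps)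
  then have "recurrence_energy x a b * (1 - 8 * cmod w / \<delta>)
      \<le> recurrence_energy x a b - 8 * cmod w * ((cmod a)\<^sup>2 + (cmod b)\<^sup>2)"
    by (simp add: algebra_simps)
  also have "\<dots> \<le> recurrence_energy x ((of_real x - w) * a - b) a"
    using assms by (intro recurrence_energy_perturbed_step) simp
  finally show ?thesis by (simp add: \<delta>_def)
qed

lemma eventually_zero_if_tendsto_zero_and_slow_decay:
  fixes Q \<epsilon> :: "nat \<Rightarrow> real"
  assumes "Q \<longlonglongrightarrow> 0" and Q_nonneg: "\<And>n. 0 \<le> Q n"
    and \<epsilon>_nonneg: "\<And>n. 0 \<le> \<epsilon> n" and "summable \<epsilon>"
    and decay: "\<And>n. Q n * (1 - \<epsilon> n) \<le> Q (Suc n)"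
  shows "eventually (\<lambda>n. Q n = 0) sequentially"
proof -
  obtain N where N: "\<And>m n. N \<le> m \<Longrightarrow> sum \<epsilon> {m..<n} < 1/2"
    using \<open>summable \<epsilon>\<close> \<epsilon>_nonneg unfolding summable_Cauchy
    by (metis abs_of_nonneg half_gt_zero real_norm_def sum_nonneg zero_less_one)
  have "Q M = 0" if "N \<le> M" for M
  proof -
    have \<epsilon>_le_1: "\<epsilon> i \<in> {0..1}" if "M \<le> i" for i
      using N[of i "Suc i"] \<open>N \<le> M\<close> that \<epsilon>_nonneg[of i] by simp
    have prod_bound: "Q M * (\<Prod>i=M..<n. 1 - \<epsilon> i) \<le> Q n" if "M \<le> n" for n
      using that
    proof (induction n rule: dec_induct)
      case (step n)
      have "Q M * (\<Prod>i=M..<Suc n. 1 - \<epsilon> i) = Q M * (\<Prod>i=M..<n. 1 - \<epsilon> i) * (1 - \<epsilon> n)"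
        using step.hyps by (simp add: prod.atLeastLessThan_Suc)
      also have "\<dots> \<le> Q n * (1 - \<epsilon> n)"
        using step.IH \<epsilon>_le_1[of n] step.hyps by (intro mult_right_mono) auto
      also have "\<dots> \<le> Q (Suc n)" by (rule decay)
      finally show ?case .
    qed simp
    have "Q M / 2 \<le> Q n" if "M \<le> n" for n
    proof -
      have "1 / 2 \<le> 1 - sum \<epsilon> {M..<n}" using N[OF \<open>N \<le> M\<close>, of n] by simp
      also have "\<dots> \<le> (\<Prod>i=M..<n. 1 - \<epsilon> i)"
        using \<epsilon>_le_1 by (intro Weierstrass_prod_ineq) auto
      finally have "Q M * (1 / 2) \<le> Q M * (\<Prod>i=M..<n. 1 - \<epsilon> i)"
        using Q_nonneg by (rule mult_left_mono)
      then show ?thesis using prod_bound[OF that] by simp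
    qed
    then have "Q M / 2 \<le> 0"
      using LIMSEQ_le_const[OF \<open>Q \<longlonglongrightarrow> 0\<close>] by blast
    then show ?thesis using Q_nonneg[of M] by simp
  qed
  then show ?thesis unfolding eventually_sequentially by blast
qed

lemma three_term_recurrence_zero_if_eventually_zero:
  fixes \<psi> c :: "nat \<Rightarrow> 'a::comm_ring"
  assumes rec: "\<And>n. \<psi> (Suc (Suc n)) = c n * \<psi> (Suc n) - \<psi> n"
    and "eventually (\<lambda>n. \<psi> n = 0) sequentially"
  shows "\<psi> n = 0"
proof -
  obtain N where "\<And>m. N \<le> m \<Longrightarrow> \<psi> m = 0"
    using assms(2) unfolding eventually_sequentially by blast
  then show ?thesis
  proof (induction N)
    case (Suc N)
    have "\<psi> N = 0" using rec[of N] Suc.prems[of "Suc N"] Suc.prems[of "Suc (Suc N)"] by simp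
    then have "\<psi> m = 0" if "N \<le> m" for m
      using Suc.prems[of m] that by (cases "m = N") auto
    then show ?case by (rule Suc.IH)
  qed simp
qed

lemma no_l2_solution_inside_band:
  fixes \<psi> v :: "nat \<Rightarrow> complex" and x :: real
  assumes "summable (\<lambda>n. cmod (v n))" and "l2seq \<psi>" and "\<bar>x\<bar> < 2"
    and rec: "\<And>n. \<psi> (Suc (Suc n)) = (of_real x - v (Suc n)) * \<psi> (Suc n) - \<psi> n"
  shows "\<psi> n = 0"
proof -
  define \<delta> where "\<delta> = 1 - \<bar>x\<bar> / 2"
  define Q where "Q n = recurrence_energy x (\<psi> (Suc n)) (\<psi> n)" for n
  define \<epsilon> where "\<epsilon> n = 8 * cmod (v (Suc n)) / \<delta>" for n
  have "0 < \<delta>" using assms(3) by (simp add: \<delta>_def)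
  have Q_lower: "\<delta> * ((cmod (\<psi> (Suc n)))\<^sup>2 + (cmod (\<psi> n))\<^sup>2) \<le> Q n" for n
    unfolding \<delta>_def Q_def by (rule recurrence_energy_lower_bound)
  have "\<forall>\<^sub>F n in sequentially. Q n = 0"
  proof (rule eventually_zero_if_tendsto_zero_and_slow_decay[where \<epsilon> = \<epsilon>])
    have "Q \<longlonglongrightarrow> recurrence_energy x 0 0"
      using l2seq_tendsto_zero[OF \<open>l2seq \<psi>\<close>]
      unfolding Q_def recurrence_energy_def by (intro tendsto_intros LIMSEQ_Suc)
    then show "Q \<longlonglongrightarrow> 0" by (simp add: recurrence_energy_def)
    show "0 \<le> Q n" for n
      using Q_lower[of n] \<open>0 < \<delta>\<close> by (meson add_nonneg_nonneg less_imp_le order_trans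
          mult_nonneg_nonneg zero_le_power2)
    show "0 \<le> \<epsilon> n" for n using \<open>0 < \<delta>\<close> by (simp add: \<epsilon>_def)
    show "summable \<epsilon>"
      unfolding \<epsilon>_def using assms(1)
      by (intro summable_divide summable_mult) (use summable_Suc_iff[of "\<lambda>n. cmod (v n)"] in simp)
    show "Q n * (1 - \<epsilon> n) \<le> Q (Suc n)" for n
      using recurrence_energy_relative_step[OF assms(3), of "\<psi> (Suc n)" "\<psi> n" "v (Suc n)"]
      by (simp add: Q_def \<epsilon>_def \<delta>_def rec)
  qed
  then have "\<forall>\<^sub>F n in sequentially. \<psi> n = 0"
  proof (rule eventually_mono)
    fix n assume "Q n = 0"
    then have "(cmod (\<psi> (Suc n)))\<^sup>2 + (cmod (\<psi> n))\<^sup>2 \<le> 0"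
      using Q_lower[of n] \<open>0 < \<delta>\<close> by (simp add: mult_le_0_iff)
    then have "(cmod (\<psi> n))\<^sup>2 \<le> 0"
      using zero_le_power2[of "cmod (\<psi> (Suc n))"] by linarith
    then show "\<psi> n = 0" by simp
  qed
  then show ?thesis using rec by (intro three_term_recurrence_zero_if_eventually_zero)
qed

lemma no_eigenvalue_inside_band:
  assumes "summable (\<lambda>n. cmod (v n))" and "\<bar>x\<bar> < 2"
  shows "complex_of_real x \<notin> point_spectrum a v"
proof
  assume "complex_of_real x \<in> point_spectrum a v"
  then obtain \<psi> where "l2seq \<psi>" and "\<psi> \<noteq> (\<lambda>_. 0)"
    and eig: "\<And>n. jacobi_apply a v \<psi> n = of_real x * \<psi> n"
    unfolding point_spectrum_def by blast
  have "\<psi> (Suc (Suc n)) = (of_real x - v (Suc n)) * \<psi> (Suc n) - \<psi> n" for n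
    using eig[of "Suc n"] by (simp add: jacobi_apply_def algebra_simps)
  then have "\<psi> n = 0" for n
    using no_l2_solution_inside_band[OF assms(1) \<open>l2seq \<psi>\<close> assms(2)] by blast
  with \<open>\<psi> \<noteq> (\<lambda>_. 0)\<close> show False by auto
qed

definition recurrence_solution :: "'a::comm_ring \<Rightarrow> (nat \<Rightarrow> 'a) \<Rightarrow> (nat \<Rightarrow> 'a) \<Rightarrow> bool" where
  "recurrence_solution z f y \<longleftrightarrow> (\<forall>n. y (Suc (Suc n)) = z * y (Suc n) + f n - y n)"

definition wronskian :: "(nat \<Rightarrow> 'a::comm_ring) \<Rightarrow> (nat \<Rightarrow> 'a) \<Rightarrow> nat \<Rightarrow> 'a" where
  "wronskian y u n = y n * u (Suc n) - y (Suc n) * u n"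

lemma wronskian_telescope:
  fixes q u f :: "nat \<Rightarrow> 'a::comm_ring"
  assumes "recurrence_solution z f q" and "recurrence_solution z (\<lambda>_. 0) u"
    and "m \<le> n"
  shows "wronskian q u m = wronskian q u n + (\<Sum>i=m..<n. u (Suc i) * f i)"
proof -
  have "wronskian q u (Suc i) - wronskian q u i = - (u (Suc i) * f i)" for i
  proof -
    have rec: "q (Suc (Suc i)) = z * q (Suc i) + f i - q i" "u (Suc (Suc i)) = z * u (Suc i) - u i"
      using assms(1,2) unfolding recurrence_solution_def by auto
    show ?thesis unfolding wronskian_def rec by (simp add: algebra_simps)
  qed
  then have "wronskian q u n - wronskian q u m = (\<Sum>i=m..<n. - (u (Suc i) * f i))"
    using sum_Suc_diff'[OF \<open>m \<le> n\<close>, of "wronskian q u"] by simp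
  then show ?thesis by (simp add: sum_negf algebra_simps)
qed

lemma variation_of_constants:
  fixes q f \<phi> \<theta> :: "nat \<Rightarrow> 'a::comm_ring"
  assumes q: "recurrence_solution z f q"
    and \<phi>: "recurrence_solution z (\<lambda>_. 0) \<phi>" and \<theta>: "recurrence_solution z (\<lambda>_. 0) \<theta>"
    and "wronskian q \<phi> 0 = 0" and "j \<le> N"
  shows "q j * wronskian \<phi> \<theta> j = \<phi> j * wronskian q \<theta> N
           + (\<Sum>i<j. \<theta> j * \<phi> (Suc i) * f i) + (\<Sum>i=j..<N. \<phi> j * \<theta> (Suc i) * f i)"
proof -
  have "q j * wronskian \<phi> \<theta> j = \<phi> j * wronskian q \<theta> j - \<theta> j * wronskian q \<phi> j"
    by (simp add: wronskian_def algebra_simps)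
  also have "wronskian q \<theta> j = wronskian q \<theta> N + (\<Sum>i=j..<N. \<theta> (Suc i) * f i)"
    using q \<theta> \<open>j \<le> N\<close> by (rule wronskian_telescope)
  also have "wronskian q \<phi> j = - (\<Sum>i<j. \<phi> (Suc i) * f i)"
    using wronskian_telescope[OF q \<phi>, of 0 j] \<open>wronskian q \<phi> 0 = 0\<close>
    by (simp add: atLeast0LessThan eq_neg_iff_add_eq_0)
  finally show ?thesis by (simp add: algebra_simps sum_distrib_left)
qed

lemma variation_of_constants_norm_le:
  fixes q f \<phi> \<theta> :: "nat \<Rightarrow> 'a::real_normed_field"
  assumes q: "recurrence_solution z f q"
    and \<phi>: "recurrence_solution z (\<lambda>_. 0) \<phi>" and \<theta>: "recurrence_solution z (\<lambda>_. 0) \<theta>"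
    and "wronskian q \<phi> 0 = 0"
    and kernel: "\<And>s t. 1 \<le> s \<Longrightarrow> s \<le> t \<Longrightarrow> norm (\<phi> s * \<theta> t) \<le> G"
    and "1 \<le> j" and "j \<le> N"
  shows "norm (q j * wronskian \<phi> \<theta> j)
           \<le> norm (\<phi> j) * norm (wronskian q \<theta> N) + G * (\<Sum>i<N. norm (f i))"
proof -
  have "norm (\<Sum>i<j. \<theta> j * \<phi> (Suc i) * f i) \<le> (\<Sum>i<j. G * norm (f i))"
  proof (rule sum_norm_le)
    fix i assume "i \<in> {..<j}"
    then have "norm (\<phi> (Suc i) * \<theta> j) \<le> G" by (intro kernel) auto
    from mult_right_mono[OF this norm_ge_zero[of "f i"]]
    show "norm (\<theta> j * \<phi> (Suc i) * f i) \<le> G * norm (f i)" by (simp add: norm_mult mult_ac)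
  qed
  moreover have "norm (\<Sum>i=j..<N. \<phi> j * \<theta> (Suc i) * f i) \<le> (\<Sum>i=j..<N. G * norm (f i))"
  proof (rule sum_norm_le)
    fix i assume "i \<in> {j..<N}"
    then have "norm (\<phi> j * \<theta> (Suc i)) \<le> G" using \<open>1 \<le> j\<close> by (intro kernel) auto
    from mult_right_mono[OF this norm_ge_zero[of "f i"]]
    show "norm (\<phi> j * \<theta> (Suc i) * f i) \<le> G * norm (f i)" by (simp add: norm_mult mult_ac)
  qed
  moreover have "(\<Sum>i<j. G * norm (f i)) + (\<Sum>i=j..<N. G * norm (f i)) = G * (\<Sum>i<N. norm (f i))"
    using \<open>j \<le> N\<close>
    by (simp add: sum_distrib_left atLeast0LessThan[symmetric] sum.atLeastLessThan_concat)
  moreover have "norm (q j * wronskian \<phi> \<theta> j) \<le> norm (\<phi> j) * norm (wronskian q \<theta> N)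
      + norm (\<Sum>i<j. \<theta> j * \<phi> (Suc i) * f i) + norm (\<Sum>i=j..<N. \<phi> j * \<theta> (Suc i) * f i)"
    unfolding variation_of_constants[OF q \<phi> \<theta> \<open>wronskian q \<phi> 0 = 0\<close> \<open>j \<le> N\<close>]
    by (intro norm_triangle_le add_right_mono norm_triangle_ineq) (simp add: norm_mult)
  ultimately show ?thesis by linarith
qed

lemma variation_of_constants_bound:
  fixes q f \<phi> \<theta> :: "nat \<Rightarrow> 'a::real_normed_field"
  assumes q: "recurrence_solution z f q"
    and \<phi>: "recurrence_solution z (\<lambda>_. 0) \<phi>" and \<theta>: "recurrence_solution z (\<lambda>_. 0) \<theta>"
    and "wronskian q \<phi> 0 = 0" and "wronskian q \<theta> \<longlonglongrightarrow> 0"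
    and "summable (\<lambda>i. norm (f i))"
    and kernel: "\<And>s t. 1 \<le> s \<Longrightarrow> s \<le> t \<Longrightarrow> norm (\<phi> s * \<theta> t) \<le> G"
    and "1 \<le> j"
  shows "norm (q j * wronskian \<phi> \<theta> j) \<le> G * (\<Sum>i. norm (f i))"
proof (rule LIMSEQ_le_const)
  have "0 \<le> G" using kernel[of 1 1] norm_ge_zero order_trans by blast
  show "\<exists>N0. \<forall>N\<ge>N0. norm (q j * wronskian \<phi> \<theta> j)
      \<le> norm (\<phi> j) * norm (wronskian q \<theta> N) + G * (\<Sum>i. norm (f i))"
  proof (intro exI allI impI)
    fix N assume "j \<le> N"
    have "G * (\<Sum>i<N. norm (f i)) \<le> G * (\<Sum>i. norm (f i))"
      using \<open>0 \<le> G\<close> \<open>summable (\<lambda>i. norm (f i))\<close> by (intro mult_left_mono sum_le_suminf) auto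
    with variation_of_constants_norm_le[OF q \<phi> \<theta> \<open>wronskian q \<phi> 0 = 0\<close> kernel \<open>1 \<le> j\<close> \<open>j \<le> N\<close>]
    show "norm (q j * wronskian \<phi> \<theta> j)
        \<le> norm (\<phi> j) * norm (wronskian q \<theta> N) + G * (\<Sum>i. norm (f i))"
      by linarith
  qed
  have "(\<lambda>N. norm (\<phi> j) * norm (wronskian q \<theta> N) + G * (\<Sum>i. norm (f i)))
      \<longlonglongrightarrow> norm (\<phi> j) * 0 + G * (\<Sum>i. norm (f i))"
    using \<open>wronskian q \<theta> \<longlonglongrightarrow> 0\<close> by (intro tendsto_intros tendsto_norm_zero)
  then show "(\<lambda>N. norm (\<phi> j) * norm (wronskian q \<theta> N) + G * (\<Sum>i. norm (f i)))
      \<longlonglongrightarrow> G * (\<Sum>i. norm (f i))"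
    by simp
qed

lemma le_of_weighted_sum_bound:
  fixes u w :: "nat \<Rightarrow> real"
  assumes "summable w" and "summable (\<lambda>n. w n * u n)"
    and "\<And>n. 0 \<le> w n" and "\<And>n. 0 \<le> u n" and "u m \<noteq> 0" and "0 < c"
    and bound: "\<And>n. u n * c \<le> G * (\<Sum>i. w i * u i)"
  shows "c \<le> G * (\<Sum>i. w i)"
proof -
  define T where "T = (\<Sum>i. w i * u i)"
  have "0 < T"
  proof -
    have "0 \<le> T" unfolding T_def using assms by (intro suminf_nonneg) auto
    moreover have "T \<noteq> 0"
    proof
      assume "T = 0"
      then have "u m * c \<le> 0" using bound[of m] by (simp add: T_def)
      moreover have "0 < u m" using assms(4)[of m] \<open>u m \<noteq> 0\<close> by (simp add: less_le)
      ultimately show False using \<open>0 < c\<close> by (simp add: mult_le_0_iff)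
    qed
    ultimately show ?thesis by simp
  qed
  have "T * c = (\<Sum>i. w i * (u i * c))"
    unfolding T_def using suminf_mult2[OF assms(2), of c] by (simp add: mult.assoc)
  also have "\<dots> \<le> (\<Sum>i. w i * (G * T))"
  proof (rule suminf_le)
    show "w i * (u i * c) \<le> w i * (G * T)" for i
      using bound[of i] assms(3)[of i] by (intro mult_left_mono) (simp_all add: T_def)
    show "summable (\<lambda>i. w i * (u i * c))"
      using summable_mult2[OF assms(2), of c] by (simp add: mult.assoc)
    show "summable (\<lambda>i. w i * (G * T))" using assms(1) by (rule summable_mult2)
  qed
  also have "\<dots> = T * (G * (\<Sum>i. w i))"
    using suminf_mult2[OF assms(1), of "G * T"] by (simp add: mult_ac)
  finally show ?thesis using \<open>0 < T\<close> by simp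
qed

lemma joukowski_free_solution:
  fixes k c\<^sub>1 c\<^sub>2 :: "'a::field"
  assumes "k \<noteq> 0"
  shows "recurrence_solution (k + inverse k) (\<lambda>_. 0) (\<lambda>n. c\<^sub>1 * inverse k ^ n + c\<^sub>2 * k ^ n)"
  unfolding recurrence_solution_def using assms by (simp add: field_simps)

(* The entries of the Green kernel built from k^-n - r k^(n-1) and k^n; the factors
   1 - r k^(2s-1) are the quantities whose supremum is g_a(z). *)
lemma jost_kernel_eq:
  fixes k r :: "'a::field"
  assumes "k \<noteq> 0" and "1 \<le> s" and "s \<le> t"
  shows "(inverse k ^ s - r * k ^ s / k) * k ^ t = k ^ (t - s) * (1 - r * k ^ (2 * s - 1))"
proof -
  obtain d where t: "t = s + d" using \<open>s \<le> t\<close> le_Suc_ex by blast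
  have first: "inverse k ^ s * k ^ t = k ^ d"
    using assms(1) by (simp add: t power_add power_inverse field_simps)
  have second: "k ^ s / k * k ^ t = k ^ d * k ^ (2 * s - 1)"
  proof -
    have "k ^ s / k * k ^ t = k ^ (s - 1) * k ^ t"
      using assms(1,2) by (simp add: power_diff)
    also have "\<dots> = k ^ d * k ^ (2 * s - 1)"
      using assms(2) t by (metis power_add Nat.add_diff_assoc2 mult_2 add.commute add.left_commute)
    finally show ?thesis .
  qed
  have "(inverse k ^ s - r * k ^ s / k) * k ^ t = inverse k ^ s * k ^ t - r * (k ^ s / k * k ^ t)"
    by (simp add: algebra_simps)
  also have "\<dots> = k ^ (t - s) * (1 - r * k ^ (2 * s - 1))"
    unfolding first second by (simp add: t algebra_simps)
  finally show ?thesis .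
qed

lemma g_fun_finite:
  assumes "g_fun a z \<noteq> \<infinity>"
  obtains G where "g_fun a z = ereal G" and "1 - a * kpar z \<noteq> 0"
    and "\<And>n. 1 \<le> n \<Longrightarrow>
      cmod (1 - (kpar z - a) / (1 - a * kpar z) * kpar z ^ (2 * n - 1)) \<le> G"
proof -
  have nz: "1 - a * kpar z \<noteq> 0" using assms unfolding g_fun_def Let_def by auto
  have le: "ereal (cmod (1 - (kpar z - a) / (1 - a * kpar z) * kpar z ^ (2 * n - 1))) \<le> g_fun a z"
    if "1 \<le> n" for n
    unfolding g_fun_def Let_def using nz that by (auto intro!: SUP_upper)
  then have "g_fun a z \<noteq> -\<infinity>" by (metis MInfty_neq_ereal(1) ereal_infty_less_eq(2) order_refl)
  then obtain G where "g_fun a z = ereal G" using assms by (cases "g_fun a z") auto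
  with nz le show ?thesis using that by auto
qed

(* Prepending the value a * psi 0 turns the boundary row of J_a into one more step of the
   free recurrence. *)
lemma jacobi_eigenvector_recurrence:
  assumes "\<And>n. jacobi_apply a v \<psi> n = z * \<psi> n"
  shows "recurrence_solution z (\<lambda>n. - v n * \<psi> n) (case_nat (a * \<psi> 0) \<psi>)"
  unfolding recurrence_solution_def
  apply (intro allI)
  subgoal for n using assms[of n] by (cases n) (simp_all add: jacobi_apply_def algebra_simps)
  done

lemma jacobi_eigenvector_green_bound:
  fixes a k :: complex and \<psi> v :: "nat \<Rightarrow> complex"
  assumes v: "summable (\<lambda>n. cmod (v n))" and "l2seq \<psi>"
    and eig: "\<And>n. jacobi_apply a v \<psi> n = (k + inverse k) * \<psi> n"
    and "k \<noteq> 0" and "cmod k < 1" and "1 - a * k \<noteq> 0"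
    and G: "\<And>n. 1 \<le> n \<Longrightarrow> cmod (1 - (k - a) / (1 - a * k) * k ^ (2 * n - 1)) \<le> G"
  shows "cmod (\<psi> n) * cmod (k - inverse k) \<le> G * (\<Sum>i. cmod (v i) * cmod (\<psi> i))"
proof -
  define r where "r = (k - a) / (1 - a * k)"
  define q where "q = case_nat (a * \<psi> 0) \<psi>"
  define \<phi> where "\<phi> = (\<lambda>n. inverse k ^ n - r * k ^ n / k)"
  define \<theta> where "\<theta> = (\<lambda>n. k ^ n)"
  have q: "recurrence_solution (k + inverse k) (\<lambda>n. - v n * \<psi> n) q"
    unfolding q_def using eig by (rule jacobi_eigenvector_recurrence)
  have \<phi>: "recurrence_solution (k + inverse k) (\<lambda>_. 0) \<phi>"
    using joukowski_free_solution[OF \<open>k \<noteq> 0\<close>, of 1 "- r / k"] by (simp add: \<phi>_def)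
  have \<theta>: "recurrence_solution (k + inverse k) (\<lambda>_. 0) \<theta>"
    using joukowski_free_solution[OF \<open>k \<noteq> 0\<close>, of 0 1] by (simp add: \<theta>_def)
  \<comment> \<open>r is chosen so that a * phi 1 = phi 0, the boundary condition at the origin\<close>
  have "wronskian q \<phi> 0 = 0"
    using \<open>k \<noteq> 0\<close> \<open>1 - a * k \<noteq> 0\<close>
    by (simp add: wronskian_def q_def \<phi>_def r_def field_simps)
  have W: "wronskian \<phi> \<theta> n = k - inverse k" for n
    using \<open>k \<noteq> 0\<close> by (simp add: wronskian_def \<phi>_def \<theta>_def field_simps power_add)
  have "wronskian q \<theta> \<longlonglongrightarrow> 0"
  proof -
    have "q \<longlonglongrightarrow> 0"
      by (rule LIMSEQ_imp_Suc) (use l2seq_tendsto_zero[OF \<open>l2seq \<psi>\<close>] in \<open>simp add: q_def\<close>)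
    moreover have "\<theta> \<longlonglongrightarrow> 0" unfolding \<theta>_def using \<open>cmod k < 1\<close> by (rule LIMSEQ_power_zero)
    ultimately have "wronskian q \<theta> \<longlonglongrightarrow> 0 * 0 - 0 * 0"
      unfolding wronskian_def by (intro tendsto_intros LIMSEQ_Suc)
    then show ?thesis by simp
  qed
  have kernel: "cmod (\<phi> s * \<theta> t) \<le> G" if "1 \<le> s" "s \<le> t" for s t
  proof -
    have "cmod (\<phi> s * \<theta> t) = cmod k ^ (t - s) * cmod (1 - r * k ^ (2 * s - 1))"
      using jost_kernel_eq[OF \<open>k \<noteq> 0\<close> that, of r]
      by (simp add: \<phi>_def \<theta>_def norm_mult norm_power)
    also have "\<dots> \<le> 1 * G"
      using G[OF that(1)] \<open>cmod k < 1\<close> by (intro mult_mono power_le_one) (auto simp: r_def)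
    finally show ?thesis by simp
  qed
  show ?thesis
    using variation_of_constants_bound[OF q \<phi> \<theta> \<open>wronskian q \<phi> 0 = 0\<close>
        \<open>wronskian q \<theta> \<longlonglongrightarrow> 0\<close> _ kernel, of "Suc n"]
      summable_norm_mult_l2seq[OF v \<open>l2seq \<psi>\<close>]
    by (simp add: q_def W norm_mult)
qed

lemma eigenvalue_outside_band_bound:
  assumes v: "summable (\<lambda>n. cmod (v n))" and "z \<in> point_spectrum a v"
    and z: "z \<notin> complex_of_real ` {-2..2}" and "g_fun a z \<noteq> \<infinity>"
  shows "ereal (sqrt (cmod (z\<^sup>2 - 4))) \<le> g_fun a z * ereal (l1norm v)"
proof -
  obtain \<psi> where "l2seq \<psi>" and "\<psi> \<noteq> (\<lambda>_. 0)"
    and eig: "\<And>n. jacobi_apply a v \<psi> n = z * \<psi> n"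
    using \<open>z \<in> point_spectrum a v\<close> unfolding point_spectrum_def by blast
  obtain m where "\<psi> m \<noteq> 0" using \<open>\<psi> \<noteq> (\<lambda>_. 0)\<close> by auto
  define k where "k = kpar z"
  have k: "0 < cmod k" "cmod k < 1" and zk: "z = k + inverse k"
    using kpar_joukowski[OF z] by (simp_all add: k_def)
  obtain G where G: "g_fun a z = ereal G" and "1 - a * k \<noteq> 0"
    and G_bound: "\<And>n. 1 \<le> n \<Longrightarrow> cmod (1 - (k - a) / (1 - a * k) * k ^ (2 * n - 1)) \<le> G"
    using g_fun_finite[OF \<open>g_fun a z \<noteq> \<infinity>\<close>] unfolding k_def by metis
  have eig_k: "jacobi_apply a v \<psi> n = (k + inverse k) * \<psi> n" for n
    using eig zk by simp
  have "k \<noteq> 0" using k by auto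
  have bound: "cmod (\<psi> n) * cmod (k - inverse k) \<le> G * (\<Sum>i. cmod (v i) * cmod (\<psi> i))" for n
    by (rule jacobi_eigenvector_green_bound[OF v \<open>l2seq \<psi>\<close> eig_k \<open>k \<noteq> 0\<close> \<open>cmod k < 1\<close>
          \<open>1 - a * k \<noteq> 0\<close> G_bound])
  have "cmod (k - inverse k) \<le> G * l1norm v"
    unfolding l1norm_def
    by (rule le_of_weighted_sum_bound[where u = "\<lambda>n. cmod (\<psi> n)" and m = m])
      (use v summable_norm_mult_l2seq[OF v \<open>l2seq \<psi>\<close>] bound \<open>\<psi> m \<noteq> 0\<close>
        joukowski_discriminant(2)[OF k] in auto)
  moreover have "sqrt (cmod (z\<^sup>2 - 4)) = cmod (k - inverse k)"
    using joukowski_discriminant(1)[OF k] zk by simp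
  ultimately show ?thesis by (simp add: G)
qed

theorem theorem3p1:
  fixes a :: complex and v :: "nat \<Rightarrow> complex"
  assumes "summable (\<lambda>n. cmod (v n))"
  shows "point_spectrum a v \<subseteq>
           {2, -2} \<union>
           {z. z \<notin> complex_of_real ` {-2..2} \<and>
               (g_fun a z = \<infinity> \<or>
                ereal (sqrt (cmod (z\<^sup>2 - 4))) \<le> g_fun a z * ereal (l1norm v))}"
proof
  fix z assume z: "z \<in> point_spectrum a v"
  show "z \<in> {2, -2} \<union> {z. z \<notin> complex_of_real ` {-2..2} \<and>
      (g_fun a z = \<infinity> \<or> ereal (sqrt (cmod (z\<^sup>2 - 4))) \<le> g_fun a z * ereal (l1norm v))}"
  proof (cases "z \<in> complex_of_real ` {-2..2}")
    case True
    then obtain x where x: "x \<in> {-2..2}" "z = of_real x" by blast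
    with z have "\<not> \<bar>x\<bar> < 2" using no_eigenvalue_inside_band[OF assms] by blast
    with x have "x = 2 \<or> x = -2" by auto
    with x show ?thesis by auto
  next
    case False
    then show ?thesis using eigenvalue_outside_band_bound[OF assms z] by auto
  qed
qed

end
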